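(* If $m>0$ is an integer, then $G_m(\lambda)$ is a polynomial in $\lambda$ of degree $m$ with zero constant term. Writing $G_m(\lambda)=\sum_{k=1}^m(-1)^{k-1}g(m,k)\lambda^k$ (and setting $g(m,k)=0$ for $k>m$ and $g(m,0)=0$), one has for all $m>1$ and $1\le k\le m$: $$k\cdot g(m,k)=g(m-1,k)+g(m-1,k-1).$$
   Context: For an integer $m$ let $R_m(z)=\sum_{n\ge1} n^{n-m}\frac{z^n}{n!}$, a formal power series in $z$. Let $T(z)=\sum_{n\ge1}n^{n-1}\frac{z^n}{n!}$ (the tree function); it satisfies $T(z)=z e^{T(z)}$, so its compositional inverse is $z=\lambda e^{-\lambda}$. Define the formal power series $G_m(\lambda):=R_m(\lambda e^{-\lambda})$, so that $G_m(T(z))=R_m(z)$. *)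

theory Defs
  imports "HOL-Computational_Algebra.Computational_Algebra"
begin

definition R :: "int \<Rightarrow> real fps" where
  "R m = Abs_fps (\<lambda>n. if n = 0 then 0 else (real n) powi (int n - m) / fact n)"

text \<open>The compositional inverse of the tree function: lambda * exp(-lambda).\<close>
definition Tinv :: "real fps" where
  "Tinv = fps_X * fps_exp (-1)"

definition G :: "int \<Rightarrow> real fps" where
  "G m = fps_compose (R m) Tinv"

definition g :: "int \<Rightarrow> nat \<Rightarrow> real" where
  "g m k = (if k = 0 \<or> int k > m then 0 else (-1) ^ (k - 1) * fps_nth (G m) k)"

end

theory Submission
  imports Defs
begin

(* Expanding R_m termwise, [lambda^k] (lambda e^-lambda)^i = (-i)^(k-i) / (k-i)!, so that
     k! [lambda^k] G_m = sum_{i=1..k} C(k,i) (-1)^(k-i) i^(k-m),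
   a k-th finite difference of x^(k-m). The identity i C(k+1,i) = (k+1) (C(k+1,i) - C(k,i))
   turns these sums into a Pascal-type triangle in (k, exponent). Read at exponent k - m it is
   the recurrence for g; started from the binomial theorem at exponent 0 it shows that the sum
   vanishes for exponents 1 .. k-1, i.e. that G_m has no terms of degree above m. *)


(* The term i = 0 is left out: it would be 0 powi j, a junk value for negative j. *)
definition alt_binom_powi_sum :: "nat \<Rightarrow> int \<Rightarrow> 'a :: field_char_0" where
  "alt_binom_powi_sum k j = (\<Sum>i=1..k. of_nat (k choose i) * (-1) ^ (k - i) * of_nat i powi j)"

lemma times_binomial_Suc_eq:
  assumes "i \<ge> 1"
  shows "(of_nat i * of_nat (Suc k choose i) :: 'a :: comm_ring_1)
           = of_nat (Suc k) * (of_nat (Suc k choose i) - of_nat (k choose i))"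
proof -
  obtain i' where i: "i = Suc i'" using assms by (cases i) auto
  have "i * (Suc k choose i) = Suc k * (k choose i')"
    using times_binomial_minus1_eq[of i "Suc k"] i by simp
  moreover have "Suc k choose i = (k choose i') + (k choose i)" using i by simp
  ultimately show ?thesis by (metis add_diff_cancel_right' of_nat_add of_nat_mult)
qed

lemma alt_binom_powi_sum_Suc_Suc:
  "(alt_binom_powi_sum (Suc k) (j + 1) :: 'a :: field_char_0)
     = of_nat (Suc k) * (alt_binom_powi_sum (Suc k) j + alt_binom_powi_sum k j)"
proof -
  define s :: "nat \<Rightarrow> 'a" where "s i = (-1) ^ (Suc k - i) * of_nat i powi j" for i
  have shifted: "(\<Sum>i=1..Suc k. of_nat (k choose i) * s i) = - alt_binom_powi_sum k j"
  proof -
    have "(\<Sum>i=1..Suc k. of_nat (k choose i) * s i) = (\<Sum>i=1..k. of_nat (k choose i) * s i)"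
      by (simp add: sum.cl_ivl_Suc)
    also have "\<dots> = (\<Sum>i=1..k. - (of_nat (k choose i) * (-1) ^ (k - i) * of_nat i powi j))"
      by (intro sum.cong refl) (simp add: s_def Suc_diff_le)
    finally show ?thesis unfolding alt_binom_powi_sum_def by (simp add: sum_negf)
  qed
  have unshifted: "(\<Sum>i=1..Suc k. of_nat (Suc k choose i) * s i) = alt_binom_powi_sum (Suc k) j"
    unfolding alt_binom_powi_sum_def s_def by (simp add: mult.assoc)
  have "alt_binom_powi_sum (Suc k) (j + 1) = (\<Sum>i=1..Suc k. (of_nat i * of_nat (Suc k choose i)) * s i)"
    unfolding alt_binom_powi_sum_def s_def
    by (intro sum.cong refl) (auto simp: power_int_add mult_ac)
  also have "\<dots> = of_nat (Suc k) * (\<Sum>i=1..Suc k. of_nat (Suc k choose i) * s i - of_nat (k choose i) * s i)"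
    by (simp add: times_binomial_Suc_eq sum_distrib_left algebra_simps)
  finally show ?thesis unfolding sum_subtractf shifted unshifted by simp
qed

lemma alt_binom_powi_sum_zero_exp:
  assumes "k \<ge> 1"
  shows "(alt_binom_powi_sum k 0 :: 'a :: field_char_0) = - ((-1) ^ k)"
proof -
  have "0 = (1 + (-1) :: 'a) ^ k" using assms by simp
  also have "\<dots> = (\<Sum>i\<le>k. of_nat (k choose i) * 1 ^ i * (-1) ^ (k - i))" by (rule binomial_ring)
  also have "\<dots> = (\<Sum>i\<in>insert 0 {1..k}. of_nat (k choose i) * (-1) ^ (k - i))"
    by (intro sum.cong) auto
  also have "\<dots> = (-1) ^ k + alt_binom_powi_sum k 0"
    unfolding alt_binom_powi_sum_def by (subst sum.insert) auto
  finally show ?thesis by (simp add: eq_neg_iff_add_eq_0 add.commute)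
qed

lemma alt_binom_powi_sum_eq_0:
  assumes "1 \<le> j" "j < k"
  shows "(alt_binom_powi_sum k (int j) :: 'a :: field_char_0) = 0"
  using assms
proof (induction j arbitrary: k rule: nat_induct_at_least)
  case base
  then obtain k' where k: "k = Suc k'" "k' \<ge> 1" by (cases k) auto
  then have "alt_binom_powi_sum (Suc k') 0 + alt_binom_powi_sum k' 0 = (0 :: 'a)"
    by (simp add: alt_binom_powi_sum_zero_exp)
  then have "alt_binom_powi_sum (Suc k') (0 + 1) = (0 :: 'a)"
    unfolding alt_binom_powi_sum_Suc_Suc by simp
  then show ?case using k by simp
next
  case (Suc j)
  then obtain k' where k: "k = Suc k'" by (cases k) auto
  have "alt_binom_powi_sum (Suc k') (int j + 1) = (0 :: 'a)"
    unfolding alt_binom_powi_sum_Suc_Suc using Suc.IH[of k'] Suc.IH[of k] Suc.prems k by simp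
  then show ?case using k by (simp add: add.commute)
qed

lemma fps_of_poly_truncate_fps_eq:
  assumes "\<And>k. k > n \<Longrightarrow> f $ k = 0"
  shows "fps_of_poly (truncate_fps (Suc n) f) = f"
  using assms by (auto simp: fps_eq_iff coeff_truncate_fps not_less)

lemma degree_truncate_fps_eq:
  assumes "f $ n \<noteq> 0"
  shows "degree (truncate_fps (Suc n) f) = n"
proof (rule antisym)
  show "degree (truncate_fps (Suc n) f) \<le> n"
    using degree_truncate_fps[of "Suc n" f] by simp
  show "n \<le> degree (truncate_fps (Suc n) f)"
    using assms by (intro le_degree) (simp add: coeff_truncate_fps)
qed

lemma Tinv_power_nth: "(Tinv ^ i) $ k = (if k < i then 0 else (- real i) ^ (k - i) / fact (k - i))"
proof -
  have "Tinv ^ i = fps_X ^ i * fps_exp (of_nat i * (-1))"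
    unfolding Tinv_def by (simp add: power_mult_distrib fps_exp_power_mult)
  then show ?thesis by (simp add: fps_X_power_mult_nth)
qed

lemma G_nth: "G m $ k = alt_binom_powi_sum k (int k - m) / fact k"
proof -
  have summand: "R m $ i * (Tinv ^ i $ k)
      = of_nat (k choose i) * (-1) ^ (k - i) * real i powi (int k - m) / fact k"
    if i: "i \<in> {1..k}" for i
  proof -
    have "real i powi (int k - m) = real i powi ((int i - m) + int (k - i))"
      using i by (simp add: of_nat_diff)
    also have "\<dots> = real i powi (int i - m) * real i powi int (k - i)"
      by (rule power_int_add) (use i in simp)
    also have "\<dots> = real i powi (int i - m) * real i ^ (k - i)"
      by (simp only: power_int_of_nat)
    finally have split_exp: "real i powi (int k - m) = real i powi (int i - m) * real i ^ (k - i)" .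
    have "R m $ i * (Tinv ^ i $ k)
        = (-1) ^ (k - i) * (real i powi (int i - m) * real i ^ (k - i)) / (fact i * fact (k - i))"
      using i by (simp add: R_def Tinv_power_nth power_minus' power_mult_distrib mult_ac)
    then show ?thesis
      using i by (simp add: split_exp binomial_fact)
  qed
  have "G m $ k = (\<Sum>i=0..k. R m $ i * (Tinv ^ i $ k))"
    unfolding G_def by (rule fps_compose_nth)
  also have "\<dots> = (\<Sum>i=1..k. R m $ i * (Tinv ^ i $ k))"
    by (simp add: sum.atLeast_Suc_atMost R_def)
  also have "\<dots> = alt_binom_powi_sum k (int k - m) / fact k"
    unfolding alt_binom_powi_sum_def sum_divide_distrib by (intro sum.cong refl summand)
  finally show ?thesis .
qed

lemma G_nth_0 [simp]: "G m $ 0 = 0"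
  by (simp add: G_def R_def)

lemma G_nth_eq_0:
  assumes "0 < m" "m < int k"
  shows "G m $ k = 0"
proof -
  have "1 \<le> nat (int k - m)" "nat (int k - m) < k" using assms by auto
  then show ?thesis
    using alt_binom_powi_sum_eq_0 assms by (fastforce simp: G_nth)
qed

lemma G_nth_nat_neq_0:
  assumes "0 < m"
  shows "G m $ nat m \<noteq> 0"
  using assms by (simp add: G_nth alt_binom_powi_sum_zero_exp)

lemma G_nth_recurrence: "real k * G m $ k = G (m - 1) $ k - G (m - 1) $ (k - 1)"
proof (cases k)
  case (Suc k')
  define j where "j = int (Suc k') - m"
  have G_vals: "G m $ Suc k' = alt_binom_powi_sum (Suc k') j / fact (Suc k')"
       "G (m - 1) $ Suc k' = alt_binom_powi_sum (Suc k') (j + 1) / fact (Suc k')"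
       "G (m - 1) $ k' = alt_binom_powi_sum k' j / fact k'"
    by (simp_all add: G_nth j_def algebra_simps)
  show ?thesis
    unfolding Suc diff_Suc_1 G_vals alt_binom_powi_sum_Suc_Suc fact_Suc
    by (simp add: field_simps del: of_nat_Suc)
qed simp

lemma g_eq_G_nth:
  assumes "0 < m"
  shows "g m k = (-1) ^ (k - 1) * G m $ k"
  using assms G_nth_eq_0[of m k] by (auto simp: g_def)

theorem corollary2:
  fixes m :: int
  shows "(m > 0 \<longrightarrow> (\<exists>p :: real poly. G m = fps_of_poly p \<and> degree p = nat m \<and> coeff p 0 = 0))
       \<and> (m > 1 \<longrightarrow> (\<forall>k::nat. 1 \<le> k \<and> int k \<le> m \<longrightarrow>
             real k * g m k = g (m - 1) k + g (m - 1) (k - 1)))"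
proof (intro conjI impI allI)
  assume m: "m > 0"
  define p where "p = truncate_fps (Suc (nat m)) (G m)"
  have "G m = fps_of_poly p"
    unfolding p_def using m by (intro fps_of_poly_truncate_fps_eq[symmetric] G_nth_eq_0) auto
  moreover have "degree p = nat m"
    unfolding p_def using m by (intro degree_truncate_fps_eq G_nth_nat_neq_0)
  moreover have "coeff p 0 = 0"
    by (simp add: p_def coeff_truncate_fps)
  ultimately show "\<exists>p :: real poly. G m = fps_of_poly p \<and> degree p = nat m \<and> coeff p 0 = 0"
    by blast
next
  fix k :: nat
  assume "m > 1" and k: "1 \<le> k \<and> int k \<le> m"
  then have "m > 0" "m - 1 > 0" by auto
  have sign: "(-1) ^ (k - 1 - 1) * G (m - 1) $ (k - 1) = - ((-1) ^ (k - 1) * G (m - 1) $ (k - 1))"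
    using k by (cases "k = 1") (auto simp: power_eq_if)
  have "real k * g m k = (-1) ^ (k - 1) * (real k * G m $ k)"
    using \<open>m > 0\<close> by (simp add: g_eq_G_nth)
  also have "\<dots> = (-1) ^ (k - 1) * G (m - 1) $ k - (-1) ^ (k - 1) * G (m - 1) $ (k - 1)"
    by (simp only: G_nth_recurrence right_diff_distrib)
  also have "\<dots> = g (m - 1) k + g (m - 1) (k - 1)"
    using \<open>m - 1 > 0\<close> sign by (simp add: g_eq_G_nth)
  finally show "real k * g m k = g (m - 1) k + g (m - 1) (k - 1)" .
qed

end
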